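(* For every $n\ge 1$: (1) $|C^*_{n+1}| = \sum_{k=0}^{n-1} [b^k a^{n-1-k}]$; (2) $|C^*_{n+1}| \le \alpha_n \le |C^*_{n+1}| + |C^*_{n+2}| \le 2|C^*_{n+2}|$.
   Context: For $\pi \in S_m$, a pair $1\le i<j\le m$ is a stretching pair if $\pi(i) < i < j < \pi(j)$; $C^*_m$ is the set of $m$-cycles (permutations of $[m]$ consisting of one cycle of length $m$) with no stretching pairs. For non-negative integers $p+q=n-1$, $[b^p a^q]$ is the number of $\pi \in S_n$ such that, for $i\in[n-1]$, $\pi(i)>i$ iff $i \in\{1,\dots,p\}$. $\alpha_n$ is the number of $\pi \in S_n$ for which there are no indices $1\le i<i+1<j<j+1\le n$ with $\pi(i+1)<\pi(i)<\pi(j)<\pi(j+1)$ (pattern $21\text{-}34$) and no such indices with $\pi(j+1)<\pi(j)<\pi(i)<\pi(i+1)$ (pattern $34\text{-}21$). *)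

theory Defs
  imports "HOL-Combinatorics.Permutations"
begin

definition Sym :: "nat \<Rightarrow> (nat \<Rightarrow> nat) set" where
  "Sym m = {p. p permutes {1..m}}"

definition is_full_cycle :: "nat \<Rightarrow> (nat \<Rightarrow> nat) \<Rightarrow> bool" where
  "is_full_cycle m p \<longleftrightarrow> (\<forall>i\<in>{1..m}. \<forall>j\<in>{1..m}. \<exists>k. (p ^^ k) i = j)"

definition stretching_pair :: "(nat \<Rightarrow> nat) \<Rightarrow> nat \<Rightarrow> nat \<Rightarrow> bool" where
  "stretching_pair p i j \<longleftrightarrow> p i < i \<and> i < j \<and> j < p j"

definition Cstar :: "nat \<Rightarrow> (nat \<Rightarrow> nat) set" where
  "Cstar m = {p \<in> Sym m. is_full_cycle m p \<and>
      \<not> (\<exists>i j. 1 \<le> i \<and> i < j \<and> j \<le> m \<and> stretching_pair p i j)}"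

text \<open>[b^p a^q] with p + q = n - 1: number of permutations of [n] whose excedances
  among positions 1..n-1 are exactly the positions 1..p.\<close>
definition ba_count :: "nat \<Rightarrow> nat \<Rightarrow> nat" where
  "ba_count p q = card {\<pi> \<in> Sym (p + q + 1).
      \<forall>i\<in>{1..p + q}. (\<pi> i > i \<longleftrightarrow> i \<le> p)}"

definition alpha :: "nat \<Rightarrow> nat" where
  "alpha n = card {\<pi> \<in> Sym n.
      \<not> (\<exists>i j. 1 \<le> i \<and> i + 1 < j \<and> j + 1 \<le> n \<and>
             \<pi> (i+1) < \<pi> i \<and> \<pi> i < \<pi> j \<and> \<pi> j < \<pi> (j+1)) \<and>
      \<not> (\<exists>i j. 1 \<le> i \<and> i + 1 < j \<and> j + 1 \<le> n \<and>
             \<pi> (j+1) < \<pi> j \<and> \<pi> j < \<pi> i \<and> \<pi> i < \<pi> (i+1))}"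

end

theory Submission
  imports Defs "HOL-Combinatorics.Cycles" "HOL-Combinatorics.Multiset_Permutations"
begin

text \<open>
  Read a full cycle of [m] from a fixed letter as a word. The cycle has a stretching pair iff the
  word, read cyclically, has a descent x \<mapsto> x' and an ascent y \<mapsto> y' with x < y.

  Read from its maximum n + 1, a cycle in C*(n+1) is a word w of [n] that avoids 21-34 and 34-21
  and has no descent starting below its last letter. So C*(n+1) injects into the words counted by
  alpha(n). Every other such word has no ascent starting above its last letter, and w \<mapsto> (n+2)(w+1)1
  embeds those words into C*(n+2); likewise w \<mapsto> (n+2)1(w+1) embeds C*(n+1) into C*(n+2).

  Read from its minimum 1 instead, a cycle in C*(n+1) is a word of [n], which the fundamental
  transformation turns bijectively into a permutation whose excedances are exactly the letters
  followed by a larger one. The stretch-free condition then says that every excedance is smaller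
  than every non-excedance, i.e. the excedance set is {1, ..., k} for some k < n, and these
  permutations are counted by [b^k a^(n-1-k)].
\<close>

section \<open>Stretch-free sets of pairs\<close>

text \<open>A pair \<open>(x, x')\<close> stands for an edge \<open>x \<mapsto> x'\<close>. On the edges of a permutation a forbidden
  configuration is a stretching pair; on the adjacent pairs of a one-line notation it is an
  occurrence of 21-34 or 34-21.\<close>

definition stretch_free :: "('a::linorder \<times> 'a) set \<Rightarrow> bool" where
  "stretch_free E \<longleftrightarrow> \<not> (\<exists>(x, x')\<in>E. \<exists>(y, y')\<in>E. x' < x \<and> x < y \<and> y < y')"

lemma stretch_free_insert:
  "stretch_free (insert (a, b) E) \<longleftrightarrow> stretch_free E \<and>
     (b < a \<longrightarrow> \<not> (\<exists>(y, y')\<in>E. a < y \<and> y < y')) \<and>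
     (a < b \<longrightarrow> \<not> (\<exists>(x, x')\<in>E. x' < x \<and> x < a))"
  unfolding stretch_free_def by auto

lemma stretch_free_image_strict_mono:
  assumes "strict_mono f"
  shows "stretch_free (map_prod f f ` E) \<longleftrightarrow> stretch_free E"
  unfolding stretch_free_def by (simp add: strict_mono_less[OF assms] split_beta)

definition adjacent_pairs :: "'a list \<Rightarrow> ('a \<times> 'a) set" where
  "adjacent_pairs xs = set (zip xs (tl xs))"

definition cycle_edges :: "'a list \<Rightarrow> ('a \<times> 'a) set" where
  "cycle_edges xs = set (zip xs (rotate1 xs))"

lemma adjacent_pairs_simps [simp]:
  "adjacent_pairs [] = {}"
  "adjacent_pairs [x] = {}"
  "adjacent_pairs (x # y # xs) = insert (x, y) (adjacent_pairs (y # xs))"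
  by (simp_all add: adjacent_pairs_def)

lemma adjacent_pairs_Cons:
  "xs \<noteq> [] \<Longrightarrow> adjacent_pairs (x # xs) = insert (x, hd xs) (adjacent_pairs xs)"
  by (cases xs) auto

lemma adjacent_pairs_map: "adjacent_pairs (map f xs) = map_prod f f ` adjacent_pairs xs"
  by (induction xs rule: induct_list012) auto

lemma adjacent_pairs_append:
  "xs \<noteq> [] \<Longrightarrow> ys \<noteq> [] \<Longrightarrow>
     adjacent_pairs (xs @ ys) = insert (last xs, hd ys) (adjacent_pairs xs \<union> adjacent_pairs ys)"
  by (induction xs rule: induct_list012) (auto simp: adjacent_pairs_Cons)

lemma adjacent_pairs_append_cases:
  assumes "(x, y) \<in> adjacent_pairs (u @ m # v)"
  obtains "(x, y) \<in> adjacent_pairs u" | "u \<noteq> []" "(x, y) = (last u, m)"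
    | "(x, y) \<in> adjacent_pairs (m # v)"
  using assms by (cases "u = []") (auto simp: adjacent_pairs_append)

lemma adjacent_pairs_append_subset:
  "adjacent_pairs u \<union> adjacent_pairs v \<subseteq> adjacent_pairs (u @ v)"
  by (cases "u = []"; cases "v = []") (auto simp: adjacent_pairs_append)

lemma adjacent_pairs_nth: "adjacent_pairs xs = {(xs ! i, xs ! Suc i) | i. Suc i < length xs}"
  unfolding adjacent_pairs_def set_zip by (auto simp: nth_tl)

lemma adjacent_pairs_upt: "adjacent_pairs [a..<b] = {(i, Suc i) | i. a \<le> i \<and> Suc i < b}"
proof (intro equalityI subsetI)
  fix p assume "p \<in> adjacent_pairs [a..<b]"
  then show "p \<in> {(i, Suc i) | i. a \<le> i \<and> Suc i < b}" by (auto simp: adjacent_pairs_nth)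
next
  fix p assume "p \<in> {(i, Suc i) | i. a \<le> i \<and> Suc i < b}"
  then obtain i where "p = (i, Suc i)" "a \<le> i" "Suc i < b" by blast
  then show "p \<in> adjacent_pairs [a..<b]"
    unfolding adjacent_pairs_nth by (auto intro!: exI[of _ "i - a"] simp del: upt_Suc)
qed

lemma adjacent_pairs_subset: "adjacent_pairs xs \<subseteq> set xs \<times> set xs"
  by (auto simp: adjacent_pairs_nth)

lemma adjacent_pairs_unique:
  "distinct xs \<Longrightarrow> (x, y) \<in> adjacent_pairs xs \<Longrightarrow> (x, z) \<in> adjacent_pairs xs \<Longrightarrow> y = z"
  by (auto simp: adjacent_pairs_nth nth_eq_iff_index_eq)

lemma adjacent_pairs_neq: "distinct xs \<Longrightarrow> (x, y) \<in> adjacent_pairs xs \<Longrightarrow> x \<noteq> y"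
  by (auto simp: adjacent_pairs_nth nth_eq_iff_index_eq)

lemma last_not_adjacent: "distinct xs \<Longrightarrow> (last xs, y) \<notin> adjacent_pairs xs"
proof
  assume "distinct xs" "(last xs, y) \<in> adjacent_pairs xs"
  then obtain i where i: "last xs = xs ! i" "Suc i < length xs" by (auto simp: adjacent_pairs_nth)
  then have "xs \<noteq> []" by auto
  with i \<open>distinct xs\<close> have "i = length xs - 1" by (simp add: last_conv_nth nth_eq_iff_index_eq)
  with i show False by simp
qed

lemma adjacent_pairs_successor:
  assumes "x \<in> set xs" "x \<noteq> last xs"
  obtains y where "(x, y) \<in> adjacent_pairs xs"
proof -
  obtain i where i: "i < length xs" "x = xs ! i" using assms(1) by (metis in_set_conv_nth)
  with assms(2) have "Suc i < length xs"
    by (metis Suc_lessI diff_Suc_1 last_conv_nth list.size(3) not_less_zero)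
  with i that show ?thesis by (auto simp: adjacent_pairs_nth)
qed

lemma zip_snoc: "length xs = Suc (length ys) \<Longrightarrow> zip xs (ys @ [y]) = zip xs ys @ [(last xs, y)]"
proof (induction xs arbitrary: ys)
  case (Cons x xs)
  then show ?case by (cases ys) auto
qed simp

lemma cycle_edges_eq:
  "xs \<noteq> [] \<Longrightarrow> cycle_edges xs = insert (last xs, hd xs) (adjacent_pairs xs)"
  by (cases xs) (auto simp: cycle_edges_def adjacent_pairs_def zip_snoc)

lemma cycle_edges_Cons:
  "xs \<noteq> [] \<Longrightarrow> cycle_edges (x # xs) = insert (x, hd xs) (insert (last xs, x) (adjacent_pairs xs))"
  by (simp add: cycle_edges_eq adjacent_pairs_Cons insert_commute)

lemma stretch_free_cycle_edges_Cons_greater: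
  assumes "xs \<noteq> []" "\<forall>x\<in>set xs. x < c"
  shows "stretch_free (cycle_edges (c # xs)) \<longleftrightarrow>
    stretch_free (adjacent_pairs xs) \<and> \<not> (\<exists>(x, x')\<in>adjacent_pairs xs. x' < x \<and> x < last xs)"
proof -
  have "hd xs < c" "last xs < c" using assms by simp_all
  moreover have "\<forall>(y, y')\<in>adjacent_pairs xs. y < c" using adjacent_pairs_subset assms(2) by blast
  ultimately show ?thesis
    by (auto simp: cycle_edges_Cons[OF assms(1)] stretch_free_insert)
qed

lemma stretch_free_cycle_edges_Cons_less:
  assumes "xs \<noteq> []" "\<forall>x\<in>set xs. c < x"
  shows "stretch_free (cycle_edges (c # xs)) \<longleftrightarrow>
    stretch_free (adjacent_pairs xs) \<and> \<not> (\<exists>(y, y')\<in>adjacent_pairs xs. y < y' \<and> last xs < y)"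
proof -
  have "c < hd xs" "c < last xs" using assms by simp_all
  moreover have "\<forall>(x, x')\<in>adjacent_pairs xs. c < x" using adjacent_pairs_subset assms(2) by blast
  ultimately show ?thesis
    by (auto simp: cycle_edges_Cons[OF assms(1)] stretch_free_insert)
qed

section \<open>Full cycles as words\<close>

lemma cycle_edges_cycle_of_list:
  "distinct xs \<Longrightarrow> cycle_edges xs = (\<lambda>x. (x, cycle_of_list xs x)) ` set xs"
proof -
  assume "distinct xs"
  then have "rotate1 xs = map (cycle_of_list xs) xs" using cyclic_rotation[of xs 1] by simp
  then show ?thesis by (simp add: cycle_edges_def zip_map2 zip_same_conv_map image_image)
qed

lemma cycle_of_list_adjacent:
  assumes "distinct xs" "(x, y) \<in> adjacent_pairs xs"
  shows "cycle_of_list xs x = y"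
proof -
  have "xs \<noteq> []" using assms(2) by auto
  then have "(x, y) \<in> cycle_edges xs" using assms(2) cycle_edges_eq by blast
  then show ?thesis using cycle_edges_cycle_of_list[OF assms(1)] by auto
qed

lemma cycle_of_list_last:
  assumes "distinct xs" "xs \<noteq> []"
  shows "cycle_of_list xs (last xs) = hd xs"
proof -
  have "(last xs, hd xs) \<in> cycle_edges xs" using cycle_edges_eq[OF assms(2)] by blast
  then show ?thesis using cycle_edges_cycle_of_list[OF assms(1)] by auto
qed

lemma cycle_of_list_nth:
  assumes "distinct xs" "i < length xs"
  shows "cycle_of_list xs (xs ! i) = xs ! (Suc i mod length xs)"
proof -
  have "map (cycle_of_list xs) xs = rotate1 xs" using cyclic_rotation[OF assms(1), of 1] by simp
  then show ?thesis by (metis assms(2) nth_map nth_rotate1)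
qed

lemma funpow_agree_cycle_of_list:
  assumes "distinct xs" "\<forall>x\<in>set xs. p x = cycle_of_list xs x" "i < length xs"
  shows "(p ^^ k) (xs ! i) = xs ! ((i + k) mod length xs)"
proof (induction k)
  case (Suc k)
  have "(i + k) mod length xs < length xs" using assms(3) by (intro mod_less_divisor) auto
  then show ?case
    using Suc assms(1,2) cycle_of_list_nth[OF assms(1)] by (simp add: mod_Suc_eq)
qed (simp add: assms(3))

lemma support_agree_cycle_of_list:
  assumes "distinct xs" "xs \<noteq> []" "\<forall>x\<in>set xs. p x = cycle_of_list xs x"
  shows "support p (hd xs) = xs"
proof -
  have hd: "hd xs = xs ! 0" and len: "0 < length xs" using assms(2) by (simp_all add: hd_conv_nth)
  note iter = funpow_agree_cycle_of_list[OF assms(1,3) len, unfolded add_0 hd[symmetric]]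
  have "least_power p (hd xs) = length xs"
    unfolding least_power_def
  proof (rule Least_equality)
    fix k assume "(p ^^ k) (hd xs) = hd xs \<and> 0 < k"
    then have "k mod length xs = 0"
      using iter[of k] assms(1) len by (simp add: hd nth_eq_iff_index_eq)
    with \<open>_ \<and> 0 < k\<close> show "length xs \<le> k" by (metis dvd_imp_le mod_0_imp_dvd)
  qed (use iter len hd in simp)
  then show ?thesis using iter by (auto intro: nth_equalityI)
qed

lemma cycle_of_list_is_full_cycle:
  assumes "distinct xs" "set xs = {1..m}"
  shows "is_full_cycle m (cycle_of_list xs)"
  unfolding is_full_cycle_def
proof (intro ballI)
  fix x y assume "x \<in> {1..m}" "y \<in> {1..m}"
  then obtain i j where ij: "i < length xs" "xs ! i = x" "j < length xs" "xs ! j = y"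
    using assms(2) by (metis in_set_conv_nth)
  have "(i + (j + length xs - i)) mod length xs = j" using ij by simp
  then show "\<exists>k. (cycle_of_list xs ^^ k) x = y"
    using funpow_agree_cycle_of_list[OF assms(1) _ ij(1)] ij by metis
qed

lemma support_full_cycle:
  assumes "\<sigma> \<in> Sym m" "is_full_cycle m \<sigma>" "a \<in> {1..m}"
  shows "support \<sigma> a = a # tl (support \<sigma> a)" "distinct (support \<sigma> a)"
    "set (support \<sigma> a) = {1..m}" "cycle_of_list (support \<sigma> a) = \<sigma>"
proof -
  have perm: "\<sigma> permutes {1..m}" using assms(1) by (simp add: Sym_def)
  then have "permutation \<sigma>" using permutation_permutes by blast
  have "0 < least_power \<sigma> a" using least_power_of_permutation(2)[OF \<open>permutation \<sigma>\<close>] .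
  then show "support \<sigma> a = a # tl (support \<sigma> a)" by (simp add: upt_conv_Cons)
  show "distinct (support \<sigma> a)" using cycle_of_permutation[OF \<open>permutation \<sigma>\<close>] .
  have "range (\<lambda>i. (\<sigma> ^^ i) a) = {1..m}"
  proof (intro equalityI subsetI)
    fix x assume "x \<in> range (\<lambda>i. (\<sigma> ^^ i) a)"
    then show "x \<in> {1..m}" using permutes_in_image[OF permutes_funpow[OF perm]] assms(3) by auto
  next
    fix x assume "x \<in> {1..m}"
    then show "x \<in> range (\<lambda>i. (\<sigma> ^^ i) a)"
      using assms(2,3) unfolding is_full_cycle_def by (metis rangeI)
  qed
  then show set: "set (support \<sigma> a) = {1..m}" using support_set[OF \<open>permutation \<sigma>\<close>] by simp
  show "cycle_of_list (support \<sigma> a) = \<sigma>"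
  proof
    fix x show "cycle_of_list (support \<sigma> a) x = \<sigma> x"
    proof (cases "x \<in> set (support \<sigma> a)")
      case True
      show ?thesis using cycle_restrict[OF \<open>permutation \<sigma>\<close> True] by simp
    next
      case False
      with set show ?thesis using id_outside_supp[OF False] permutes_not_in[OF perm] by simp
    qed
  qed
qed

lemma stretching_pair_iff_not_stretch_free:
  assumes "distinct xs" "set xs = {1..m}"
  shows "(\<exists>i j. 1 \<le> i \<and> i < j \<and> j \<le> m \<and> stretching_pair (cycle_of_list xs) i j)
           \<longleftrightarrow> \<not> stretch_free (cycle_edges xs)"
proof -
  have "\<not> stretch_free (cycle_edges xs) \<longleftrightarrow> (\<exists>x\<in>set xs. \<exists>y\<in>set xs.
      cycle_of_list xs x < x \<and> x < y \<and> y < cycle_of_list xs y)"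
    by (simp add: cycle_edges_cycle_of_list[OF assms(1)] stretch_free_def)
  also have "\<dots> \<longleftrightarrow> (\<exists>i j. 1 \<le> i \<and> i < j \<and> j \<le> m \<and> stretching_pair (cycle_of_list xs) i j)"
  proof
    assume "\<exists>x\<in>set xs. \<exists>y\<in>set xs. cycle_of_list xs x < x \<and> x < y \<and> y < cycle_of_list xs y"
    then obtain x y where "x \<in> {1..m}" "y \<in> {1..m}"
      "cycle_of_list xs x < x" "x < y" "y < cycle_of_list xs y" using assms(2) by blast
    then show "\<exists>i j. 1 \<le> i \<and> i < j \<and> j \<le> m \<and> stretching_pair (cycle_of_list xs) i j"
      unfolding stretching_pair_def by (intro exI[of _ x] exI[of _ y]) auto
  next
    assume "\<exists>i j. 1 \<le> i \<and> i < j \<and> j \<le> m \<and> stretching_pair (cycle_of_list xs) i j"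
    then obtain i j where "1 \<le> i" "i < j" "j \<le> m" "stretching_pair (cycle_of_list xs) i j" by blast
    then show "\<exists>x\<in>set xs. \<exists>y\<in>set xs. cycle_of_list xs x < x \<and> x < y \<and> y < cycle_of_list xs y"
      using assms(2) unfolding stretching_pair_def
      by (intro bexI[of _ i] bexI[of _ j]) auto
  qed
  finally show ?thesis by blast
qed

lemma cycle_of_list_in_Cstar:
  assumes "distinct xs" "set xs = {1..m}" "stretch_free (cycle_edges xs)"
  shows "cycle_of_list xs \<in> Cstar m"
  using assms cycle_permutes[of xs] cycle_of_list_is_full_cycle[OF assms(1,2)]
    stretching_pair_iff_not_stretch_free[OF assms(1,2)]
  unfolding Cstar_def Sym_def by (simp only: mem_Collect_eq) blast

lemma card_Cstar_eq_card_words: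
  assumes "a \<in> {1..m}"
  shows "card (Cstar m) =
    card {w \<in> permutations_of_set ({1..m} - {a}). stretch_free (cycle_edges (a # w))}"
    (is "_ = card ?W")
proof (rule bij_betw_same_card)
  have word: "distinct (a # w)" "set (a # w) = {1..m}" if "w \<in> ?W" for w
  proof -
    have "distinct w" "set w = {1..m} - {a}" using that by (simp_all add: permutations_of_set_def)
    then show "distinct (a # w)" "set (a # w) = {1..m}" using assms by (simp_all add: insert_absorb)
  qed
  have support: "support \<sigma> a = a # tl (support \<sigma> a)" "distinct (support \<sigma> a)"
    "set (support \<sigma> a) = {1..m}" "cycle_of_list (support \<sigma> a) = \<sigma>" if "\<sigma> \<in> Cstar m" for \<sigma>
    using that support_full_cycle[OF _ _ assms] unfolding Cstar_def by auto
  show "bij_betw (\<lambda>\<sigma>. tl (support \<sigma> a)) (Cstar m) ?W"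
  proof (rule bij_betw_byWitness[where f' = "\<lambda>w. cycle_of_list (a # w)"])
    show "\<forall>\<sigma>\<in>Cstar m. cycle_of_list (a # tl (support \<sigma> a)) = \<sigma>"
      using support(1,4) by metis
    show "\<forall>w\<in>?W. tl (support (cycle_of_list (a # w)) a) = w"
      using support_agree_cycle_of_list[OF word(1)] by fastforce
    show "(\<lambda>\<sigma>. tl (support \<sigma> a)) ` Cstar m \<subseteq> ?W"
    proof (rule image_subsetI)
      fix \<sigma> assume "\<sigma> \<in> Cstar m"
      note L = support[OF this]
      have "stretch_free (cycle_edges (support \<sigma> a))"
        using \<open>\<sigma> \<in> Cstar m\<close> stretching_pair_iff_not_stretch_free[OF L(2,3), unfolded L(4)]
        unfolding Cstar_def by blast
      moreover have "tl (support \<sigma> a) \<in> permutations_of_set ({1..m} - {a})"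
        using L(1-3)
        by (metis Diff_insert_absorb distinct.simps(2) list.simps(15) permutations_of_setI)
      ultimately show "tl (support \<sigma> a) \<in> ?W" using L(1) by simp
    qed
    show "(\<lambda>w. cycle_of_list (a # w)) ` ?W \<subseteq> Cstar m"
      using cycle_of_list_in_Cstar word by blast
  qed
qed

lemma bij_betw_if_inj_on_card_eq:
  assumes "inj_on f A" "f ` A \<subseteq> B" "finite B" "card A = card B"
  shows "bij_betw f A B"
  using card_subset_eq[OF assms(3,2)] card_image[OF assms(1)] assms(1,4) by (simp add: bij_betw_def)

lemma card_Collect_bij_betw:
  assumes "bij_betw f A B"
  shows "card {x \<in> A. P (f x)} = card {y \<in> B. P y}"
proof (rule bij_betw_same_card, rule bij_betw_subset[OF assms])
  show "f ` {x \<in> A. P (f x)} = {y \<in> B. P y}" using assms by (auto simp: bij_betw_def)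
qed auto

lemma card_Sym: "card (Sym n) = fact n"
  using card_permutations[of "{1..n}" n] by (simp add: Sym_def)

lemma finite_Sym: "finite (Sym n)"
  by (simp add: Sym_def finite_permutations)

lemma bij_betw_Sym_permutations_of_set:
  "bij_betw (\<lambda>\<pi>. map \<pi> [1..<Suc n]) (Sym n) (permutations_of_set {1..n})"
proof (rule bij_betw_if_inj_on_card_eq)
  show "inj_on (\<lambda>\<pi>. map \<pi> [1..<Suc n]) (Sym n)"
  proof (rule inj_onI)
    fix \<pi> \<rho> assume "\<pi> \<in> Sym n" "\<rho> \<in> Sym n" "map \<pi> [1..<Suc n] = map \<rho> [1..<Suc n]"
    then show "\<pi> = \<rho>"
      unfolding Sym_def mem_Collect_eq map_eq_conv set_upt atLeastLessThanSuc_atLeastAtMost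
      by (metis permutes_not_in ext)
  qed
  show "(\<lambda>\<pi>. map \<pi> [1..<Suc n]) ` Sym n \<subseteq> permutations_of_set {1..n}"
  proof (rule image_subsetI)
    fix \<pi> assume "\<pi> \<in> Sym n"
    then have "\<pi> permutes {1..n}" by (simp add: Sym_def)
    then show "map \<pi> [1..<Suc n] \<in> permutations_of_set {1..n}"
      using permutes_inj_on[of \<pi> "{1..n}"] permutes_image[of \<pi> "{1..n}"]
      by (simp add: permutations_of_set_def distinct_map atLeastLessThanSuc_atLeastAtMost
          del: upt_Suc)
  qed
qed (simp_all add: card_Sym)

section \<open>Comparing alpha with the numbers of stretch-free cycles\<close>

lemma stretch_free_iff_pattern_free:
  "stretch_free (adjacent_pairs (map \<pi> [1..<Suc n])) \<longleftrightarrow>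
    \<not> (\<exists>i j. 1 \<le> i \<and> i + 1 < j \<and> j + 1 \<le> n \<and> \<pi> (i+1) < \<pi> i \<and> \<pi> i < \<pi> j \<and> \<pi> j < \<pi> (j+1)) \<and>
    \<not> (\<exists>i j. 1 \<le> i \<and> i + 1 < j \<and> j + 1 \<le> n \<and> \<pi> (j+1) < \<pi> j \<and> \<pi> j < \<pi> i \<and> \<pi> i < \<pi> (i+1))"
    (is "_ \<longleftrightarrow> \<not> ?P \<and> \<not> ?Q")
proof -
  have "\<not> stretch_free (adjacent_pairs (map \<pi> [1..<Suc n])) \<longleftrightarrow>
      (\<exists>i j. 1 \<le> i \<and> i < n \<and> 1 \<le> j \<and> j < n \<and>
        \<pi> (Suc i) < \<pi> i \<and> \<pi> i < \<pi> j \<and> \<pi> j < \<pi> (Suc j))"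
    unfolding adjacent_pairs_map adjacent_pairs_upt stretch_free_def by blast
  also have "\<dots> \<longleftrightarrow> ?P \<or> ?Q"
  proof
    assume "\<exists>i j. 1 \<le> i \<and> i < n \<and> 1 \<le> j \<and> j < n \<and>
        \<pi> (Suc i) < \<pi> i \<and> \<pi> i < \<pi> j \<and> \<pi> j < \<pi> (Suc j)"
    then obtain i j where ij: "1 \<le> i" "i < n" "1 \<le> j" "j < n"
      "\<pi> (Suc i) < \<pi> i" "\<pi> i < \<pi> j" "\<pi> j < \<pi> (Suc j)" by blast
    then have "i \<noteq> j" "j \<noteq> Suc i" "i \<noteq> Suc j" by auto
    then consider "i + 1 < j" | "j + 1 < i" by linarith
    then show "?P \<or> ?Q"
    proof cases
      case 1 with ij show ?thesis by (intro disjI1 exI[of _ i] exI[of _ j]) auto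
    next
      case 2 with ij show ?thesis by (intro disjI2 exI[of _ j] exI[of _ i]) auto
    qed
  next
    assume "?P \<or> ?Q"
    then show "\<exists>i j. 1 \<le> i \<and> i < n \<and> 1 \<le> j \<and> j < n \<and>
        \<pi> (Suc i) < \<pi> i \<and> \<pi> i < \<pi> j \<and> \<pi> j < \<pi> (Suc j)"
    proof
      assume ?P
      then obtain i j where "1 \<le> i" "i + 1 < j" "j + 1 \<le> n"
        "\<pi> (i+1) < \<pi> i" "\<pi> i < \<pi> j" "\<pi> j < \<pi> (j+1)" by blast
      then show ?thesis by (intro exI[of _ i] exI[of _ j]) auto
    next
      assume ?Q
      then obtain i j where "1 \<le> i" "i + 1 < j" "j + 1 \<le> n"
        "\<pi> (j+1) < \<pi> j" "\<pi> j < \<pi> i" "\<pi> i < \<pi> (i+1)" by blast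
      then show ?thesis by (intro exI[of _ j] exI[of _ i]) auto
    qed
  qed
  finally show ?thesis by blast
qed

lemma alpha_eq_card_words:
  "alpha n = card {w \<in> permutations_of_set {1..n}. stretch_free (adjacent_pairs w)}"
  unfolding alpha_def stretch_free_iff_pattern_free[symmetric]
  by (rule card_Collect_bij_betw[OF bij_betw_Sym_permutations_of_set])

lemma card_Cstar_Suc_eq_card_words:
  "card (Cstar (Suc n)) =
    card {w \<in> permutations_of_set {1..n}. stretch_free (cycle_edges (Suc n # w))}"
  using card_Cstar_eq_card_words[of "Suc n" "Suc n"] by (simp add: atLeastAtMostSuc_conv)

lemma in_permutations_of_set_bounds:
  assumes "w \<in> permutations_of_set {1..n}" "1 \<le> n"
  shows "w \<noteq> []" "\<forall>x\<in>set w. 0 < x \<and> x < Suc n"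
  using assms by (auto simp: permutations_of_set_def)

lemma shift_Cons_in_permutations_of_set:
  "w \<in> permutations_of_set {1..n} \<Longrightarrow> 1 # map Suc w \<in> permutations_of_set {1..Suc n}"
  by (auto simp: permutations_of_set_def distinct_map atLeastAtMost_insertL)

lemma shift_snoc_in_permutations_of_set:
  "w \<in> permutations_of_set {1..n} \<Longrightarrow> map Suc w @ [1] \<in> permutations_of_set {1..Suc n}"
  by (auto simp: permutations_of_set_def distinct_map atLeastAtMost_insertL)

lemma adjacent_pairs_shift_Cons:
  "xs \<noteq> [] \<Longrightarrow>
    adjacent_pairs (1 # map Suc xs) = insert (1, Suc (hd xs)) (map_prod Suc Suc ` adjacent_pairs xs)"
  by (simp add: adjacent_pairs_Cons adjacent_pairs_map hd_map)

lemma adjacent_pairs_shift_snoc: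
  "xs \<noteq> [] \<Longrightarrow>
    adjacent_pairs (map Suc xs @ [1]) = insert (Suc (last xs), 1) (map_prod Suc Suc ` adjacent_pairs xs)"
  by (simp add: adjacent_pairs_append adjacent_pairs_map last_map)

lemma stretch_free_shift_Cons:
  assumes "w \<in> permutations_of_set {1..n}" "1 \<le> n" "stretch_free (cycle_edges (Suc n # w))"
  shows "stretch_free (cycle_edges (Suc (Suc n) # 1 # map Suc w))"
proof -
  note w = in_permutations_of_set_bounds[OF assms(1,2)]
  have old: "stretch_free (adjacent_pairs w)" "\<not> (\<exists>(x, x')\<in>adjacent_pairs w. x' < x \<and> x < last w)"
    using assms(3) stretch_free_cycle_edges_Cons_greater w by blast+
  have "stretch_free (adjacent_pairs (1 # map Suc w))"
    unfolding adjacent_pairs_shift_Cons[OF w(1)] stretch_free_insert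
    using old(1) by (auto simp: stretch_free_image_strict_mono strict_mono_Suc_iff)
  moreover have "\<not> (\<exists>(x, x')\<in>adjacent_pairs (1 # map Suc w). x' < x \<and> x < last (1 # map Suc w))"
    unfolding adjacent_pairs_shift_Cons[OF w(1)] using old(2) w(1) by (auto simp: last_map)
  moreover have "\<forall>x\<in>set (1 # map Suc w). x < Suc (Suc n)" using w by auto
  ultimately show ?thesis
    using stretch_free_cycle_edges_Cons_greater[of "1 # map Suc w" "Suc (Suc n)"] by simp
qed

text \<open>A descent of \<open>w\<close> below \<open>last w\<close> rules out, by stretch-freeness, every ascent starting
  above \<open>last w\<close>; that is exactly what the new closing descent \<open>(last w + 1, 1)\<close> requires.\<close>

lemma stretch_free_shift_snoc:
  assumes "w \<in> permutations_of_set {1..n}" "1 \<le> n"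
    and "stretch_free (adjacent_pairs w)" "\<not> stretch_free (cycle_edges (Suc n # w))"
  shows "stretch_free (cycle_edges (Suc (Suc n) # map Suc w @ [1]))"
proof -
  note w = in_permutations_of_set_bounds[OF assms(1,2)]
  obtain a a' where a: "(a, a') \<in> adjacent_pairs w" "a' < a" "a < last w"
    using assms(3,4) stretch_free_cycle_edges_Cons_greater w by blast
  have no_late_ascent: "\<not> (\<exists>(b, b')\<in>adjacent_pairs w. last w < b \<and> b < b')"
  proof
    assume "\<exists>(b, b')\<in>adjacent_pairs w. last w < b \<and> b < b'"
    then obtain b b' where b: "(b, b') \<in> adjacent_pairs w" "last w < b" "b < b'" by blast
    with a have "a < b" by simp
    with a(1,2) b(1,3) assms(3) show False unfolding stretch_free_def by blast
  qed
  have "stretch_free (adjacent_pairs (map Suc w @ [1]))"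
    unfolding adjacent_pairs_shift_snoc[OF w(1)] stretch_free_insert
    using assms(3) no_late_ascent by (auto simp: stretch_free_image_strict_mono strict_mono_Suc_iff)
  moreover have bounds: "\<forall>x\<in>set (map Suc w @ [1]). 0 < x \<and> x < Suc (Suc n)" using w by auto
  then have "\<not> (\<exists>(x, x')\<in>adjacent_pairs (map Suc w @ [1]). x' < x \<and> x < last (map Suc w @ [1]))"
    using adjacent_pairs_subset[of "map Suc w @ [1]"] by fastforce
  ultimately show ?thesis
    using bounds stretch_free_cycle_edges_Cons_greater[of "map Suc w @ [1]" "Suc (Suc n)"] by simp
qed

lemma card_Cstar_le_alpha:
  assumes "1 \<le> n"
  shows "card (Cstar (Suc n)) \<le> alpha n"
  unfolding card_Cstar_Suc_eq_card_words alpha_eq_card_words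
proof (rule card_mono)
  show "{w \<in> permutations_of_set {1..n}. stretch_free (cycle_edges (Suc n # w))}
      \<subseteq> {w \<in> permutations_of_set {1..n}. stretch_free (adjacent_pairs w)}"
    using stretch_free_cycle_edges_Cons_greater in_permutations_of_set_bounds[OF _ assms] by blast
qed simp

lemma card_Cstar_le_card_Cstar_Suc:
  assumes "1 \<le> n"
  shows "card (Cstar (Suc n)) \<le> card (Cstar (Suc (Suc n)))"
  unfolding card_Cstar_Suc_eq_card_words
proof (rule card_inj_on_le[where f = "\<lambda>w. 1 # map Suc w"])
  show "inj_on (\<lambda>w. 1 # map Suc w) A" for A by (simp add: inj_on_def)
  show "(\<lambda>w. 1 # map Suc w) `
        {w \<in> permutations_of_set {1..n}. stretch_free (cycle_edges (Suc n # w))}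
      \<subseteq> {w \<in> permutations_of_set {1..Suc n}. stretch_free (cycle_edges (Suc (Suc n) # w))}"
    using shift_Cons_in_permutations_of_set stretch_free_shift_Cons[OF _ assms] by blast
qed simp

lemma alpha_le_card_Cstar_add:
  assumes "1 \<le> n"
  shows "alpha n \<le> card (Cstar (Suc n)) + card (Cstar (Suc (Suc n)))"
proof -
  define P where "P = {w \<in> permutations_of_set {1..n}. stretch_free (adjacent_pairs w)}"
  define C where
    "C m = {w \<in> permutations_of_set {1..m}. stretch_free (cycle_edges (Suc m # w))}" for m
  have "card (P - C n) \<le> card (C (Suc n))"
  proof (rule card_inj_on_le[where f = "\<lambda>w. map Suc w @ [1]"])
    show "inj_on (\<lambda>w. map Suc w @ [1]) (P - C n)" by (simp add: inj_on_def)
  qed (use shift_snoc_in_permutations_of_set stretch_free_shift_snoc[OF _ assms]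
      in \<open>auto simp: P_def C_def\<close>)
  have "alpha n = card P" unfolding P_def by (rule alpha_eq_card_words)
  also have "\<dots> \<le> card (C n \<union> (P - C n))" by (rule card_mono) (auto simp: P_def C_def)
  also have "\<dots> \<le> card (C n) + card (P - C n)" by (rule card_Un_le)
  also have "\<dots> \<le> card (Cstar (Suc n)) + card (Cstar (Suc (Suc n)))"
    using \<open>card (P - C n) \<le> card (C (Suc n))\<close> by (simp add: C_def card_Cstar_Suc_eq_card_words)
  finally show ?thesis .
qed

section \<open>The fundamental transformation\<close>

text \<open>The fundamental transformation with cycles opened at their minima: the word is cut before
  each of its left-to-right minima and every piece becomes a cycle.\<close>

function perm_of_word :: "'a::linorder list \<Rightarrow> 'a \<Rightarrow> 'a" where
  "perm_of_word w = (if w = [] then id else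
     perm_of_word (takeWhile (\<lambda>x. x \<noteq> Min (set w)) w) \<circ>
     cycle_of_list (dropWhile (\<lambda>x. x \<noteq> Min (set w)) w))"
  by auto
termination
proof (relation "measure length")
  fix w :: "'a list"
  assume "\<not> w = []"
  then have "takeWhile (\<lambda>x. x \<noteq> Min (set w)) w \<noteq> w" by simp
  then have "length (takeWhile (\<lambda>x. x \<noteq> Min (set w)) w) \<noteq> length w"
    by (metis takeWhile_eq_take take_all_iff order_refl)
  then show "(takeWhile (\<lambda>x. x \<noteq> Min (set w)) w, w) \<in> measure length"
    using length_takeWhile_le[of "\<lambda>x. x \<noteq> Min (set w)" w] by simp
qed simp

declare perm_of_word.simps [simp del]

lemma perm_of_word_Nil [simp]: "perm_of_word [] = id"
  by (simp add: perm_of_word.simps)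

lemma split_at_Min:
  fixes w :: "'a::linorder list"
  assumes "distinct w" "w \<noteq> []"
  obtains u m v where "w = u @ m # v" "\<forall>x\<in>set u \<union> set v. m < x"
proof -
  define m where "m = Min (set w)"
  obtain u v where uv: "w = u @ m # v"
    using Min_in[of "set w"] assms(2) split_list unfolding m_def by fastforce
  have "m < x" if "x \<in> set u \<union> set v" for x
  proof -
    have "x \<in> set w" "x \<noteq> m" using that assms(1) uv by auto
    then show ?thesis unfolding m_def by (simp add: order.not_eq_order_implies_strict)
  qed
  with uv that show ?thesis by blast
qed

lemma Min_set_split:
  fixes m :: "'a::linorder"
  assumes "\<forall>x\<in>set u \<union> set v. m < x"
  shows "Min (set (u @ m # v)) = m"
  using assms by (intro Min_eqI) (auto intro: less_imp_le)

lemma perm_of_word_split: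
  assumes "distinct (u @ m # v)" "\<forall>x\<in>set u \<union> set v. m < x"
  shows "perm_of_word (u @ m # v) = perm_of_word u \<circ> cycle_of_list (m # v)"
proof -
  have "Min (set (u @ m # v)) = m" using Min_set_split[OF assms(2)] .
  moreover have "m \<notin> set u" using assms(1) by simp
  ultimately show ?thesis
    using perm_of_word.simps[of "u @ m # v"] by (simp add: takeWhile_append dropWhile_append)
qed

lemma split_at_Min_induct [consumes 1, case_names Nil split]:
  fixes w :: "'a::linorder list"
  assumes "distinct w" "P []"
    and "\<And>u m v. distinct (u @ m # v) \<Longrightarrow> \<forall>x\<in>set u \<union> set v. m < x \<Longrightarrow> P u \<Longrightarrow> P (u @ m # v)"
  shows "P w"
  using assms(1)
proof (induction w rule: length_induct)
  case (1 w)
  show ?case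
  proof (cases "w = []")
    case False
    then obtain u m v where uv: "w = u @ m # v" "\<forall>x\<in>set u \<union> set v. m < x"
      using split_at_Min[OF "1.prems"] by blast
    with "1.IH" "1.prems" have "P u" by simp
    with uv "1.prems" show ?thesis using assms(3) by simp
  qed (simp add: assms(2))
qed

lemma perm_of_word_permutes: "distinct w \<Longrightarrow> perm_of_word w permutes set w"
proof (induction w rule: split_at_Min_induct)
  case (split u m v)
  have "cycle_of_list (m # v) permutes set (u @ m # v)"
    by (rule permutes_subset[OF cycle_permutes]) auto
  moreover have "perm_of_word u permutes set (u @ m # v)"
    by (rule permutes_subset[OF split.IH]) auto
  ultimately show ?case
    unfolding perm_of_word_split[OF split.hyps(1,2)] by (rule permutes_compose)
qed (simp only: perm_of_word_Nil permutes_id)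

lemma perm_of_word_split_apply:
  assumes "distinct (u @ m # v)" "\<forall>x\<in>set u \<union> set v. m < x"
  shows "x \<in> set u \<Longrightarrow> perm_of_word (u @ m # v) x = perm_of_word u x"
    and "x \<in> set (m # v) \<Longrightarrow> perm_of_word (u @ m # v) x = cycle_of_list (m # v) x"
proof -
  have disj: "set u \<inter> set (m # v) = {}" using assms(1) by auto
  have perm: "perm_of_word u permutes set u" using assms(1) by (simp add: perm_of_word_permutes)
  show "x \<in> set u \<Longrightarrow> perm_of_word (u @ m # v) x = perm_of_word u x"
  proof -
    assume "x \<in> set u"
    with disj have "x \<notin> set (m # v)" by blast
    then show ?thesis using id_outside_supp[OF \<open>x \<notin> set (m # v)\<close>]
      by (simp add: perm_of_word_split[OF assms])
  qed
  assume "x \<in> set (m # v)"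
  then have "cycle_of_list (m # v) x \<in> set (m # v)"
    by (simp only: permutes_in_image[OF cycle_permutes])
  then show "perm_of_word (u @ m # v) x = cycle_of_list (m # v) x"
    using disj permutes_not_in[OF perm] by (auto simp: perm_of_word_split[OF assms])
qed

lemma perm_of_word_ascent:
  "distinct w \<Longrightarrow> (x, y) \<in> adjacent_pairs w \<Longrightarrow> x < y \<Longrightarrow> perm_of_word w x = y"
proof (induction w arbitrary: x y rule: split_at_Min_induct)
  case (split u m v)
  from split.prems(1) show ?case
  proof (cases rule: adjacent_pairs_append_cases)
    case 1
    then have "x \<in> set u" using adjacent_pairs_subset by blast
    moreover have "distinct u" using split.hyps(1) by simp
    ultimately show ?thesis
      using split.IH 1 split.prems(2) perm_of_word_split_apply(1)[OF split.hyps(1,2)] by simp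
  next
    case 2
    then have "last u \<in> set u" by simp
    with split.hyps(2) have "m < last u" by blast
    with 2 split.prems(2) show ?thesis by simp
  next
    case 3
    then have "x \<in> set (m # v)" using adjacent_pairs_subset by blast
    moreover have "distinct (m # v)" using split.hyps(1) by simp
    ultimately show ?thesis
      using cycle_of_list_adjacent[OF \<open>distinct (m # v)\<close> 3]
        perm_of_word_split_apply(2)[OF split.hyps(1,2)] by simp
  qed
qed simp

lemma perm_of_word_le:
  "distinct w \<Longrightarrow> x \<in> set w \<Longrightarrow> \<forall>y. (x, y) \<in> adjacent_pairs w \<longrightarrow> y < x \<Longrightarrow> perm_of_word w x \<le> x"
proof (induction w arbitrary: x rule: split_at_Min_induct)
  case (split u m v)
  have sub: "adjacent_pairs u \<subseteq> adjacent_pairs (u @ m # v)"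
    "adjacent_pairs (m # v) \<subseteq> adjacent_pairs (u @ m # v)"
    using adjacent_pairs_append_subset[of u "m # v"] by blast+
  show ?case
  proof (cases "x \<in> set u")
    case True
    then show ?thesis using split.IH[OF True] split.prems(2) sub(1)
      perm_of_word_split_apply(1)[OF split.hyps(1,2) True] by auto
  next
    case False
    then have x: "x \<in> set (m # v)" using split.prems(1) by simp
    have d: "distinct (m # v)" using split.hyps(1) by simp
    have "cycle_of_list (m # v) x \<le> x"
    proof (cases "x = last (m # v)")
      case True
      then have "cycle_of_list (m # v) x = m" using cycle_of_list_last[OF d] by simp
      then show ?thesis using x split.hyps(2) by (auto intro: less_imp_le)
    next
      case False
      then obtain y where "(x, y) \<in> adjacent_pairs (m # v)"
        using adjacent_pairs_successor[OF x] by blast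
      then show ?thesis
        using cycle_of_list_adjacent[OF d] split.prems(2) sub(2) by (auto intro: less_imp_le)
    qed
    then show ?thesis using perm_of_word_split_apply(2)[OF split.hyps(1,2) x] by simp
  qed
qed simp

lemma perm_of_word_excedance_iff:
  assumes "distinct w" "x \<in> set w"
  shows "x < perm_of_word w x \<longleftrightarrow> (\<exists>y. (x, y) \<in> adjacent_pairs w \<and> x < y)"
proof
  assume "x < perm_of_word w x"
  then have "\<not> (\<forall>y. (x, y) \<in> adjacent_pairs w \<longrightarrow> y < x)"
    using perm_of_word_le[OF assms] leD by blast
  then show "\<exists>y. (x, y) \<in> adjacent_pairs w \<and> x < y"
    using adjacent_pairs_neq[OF assms(1)] by (auto simp: not_less order.order_iff_strict)
qed (use perm_of_word_ascent[OF assms(1)] in auto)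

lemma perm_of_word_nonexcedance_iff:
  assumes "distinct w" "x \<in> set w"
  shows "perm_of_word w x \<le> x \<longleftrightarrow> x = last w \<or> (\<exists>x'. (x, x') \<in> adjacent_pairs w \<and> x' < x)"
proof -
  have "perm_of_word w x \<le> x \<longleftrightarrow> \<not> (\<exists>y. (x, y) \<in> adjacent_pairs w \<and> x < y)"
    using perm_of_word_excedance_iff[OF assms] by (simp add: not_less[symmetric])
  also have "\<dots> \<longleftrightarrow> x = last w \<or> (\<exists>x'. (x, x') \<in> adjacent_pairs w \<and> x' < x)"
  proof
    assume no_ascent: "\<not> (\<exists>y. (x, y) \<in> adjacent_pairs w \<and> x < y)"
    show "x = last w \<or> (\<exists>x'. (x, x') \<in> adjacent_pairs w \<and> x' < x)"
    proof (cases "x = last w")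
      case False
      then obtain x' where "(x, x') \<in> adjacent_pairs w"
        using adjacent_pairs_successor[OF assms(2)] by blast
      with no_ascent adjacent_pairs_neq[OF assms(1)] show ?thesis by (meson linorder_neqE)
    qed simp
  next
    assume "x = last w \<or> (\<exists>x'. (x, x') \<in> adjacent_pairs w \<and> x' < x)"
    then show "\<not> (\<exists>y. (x, y) \<in> adjacent_pairs w \<and> x < y)"
      using last_not_adjacent[OF assms(1)] adjacent_pairs_unique[OF assms(1)] by (metis order.asym)
  qed
  finally show ?thesis .
qed

lemma support_perm_of_word_Min:
  assumes "distinct (u @ m # v)" "\<forall>x\<in>set u \<union> set v. m < x"
  shows "support (perm_of_word (u @ m # v)) m = m # v"
  using support_agree_cycle_of_list[of "m # v" "perm_of_word (u @ m # v)"] assms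
    perm_of_word_split_apply(2)[OF assms] by simp

lemma perm_of_word_inj:
  "distinct w \<Longrightarrow> distinct w' \<Longrightarrow> set w = set w' \<Longrightarrow> perm_of_word w = perm_of_word w' \<Longrightarrow> w = w'"
proof (induction w arbitrary: w' rule: split_at_Min_induct)
  case (split u m v)
  then have "w' \<noteq> []" by auto
  then obtain u' m' v' where w': "w' = u' @ m' # v'" "\<forall>x\<in>set u' \<union> set v'. m' < x"
    using split_at_Min[OF split.prems(1)] by blast
  note prems = split.prems[unfolded w'(1)]
  have "m' = m" using Min_set_split[OF split.hyps(2)] Min_set_split[OF w'(2)] prems(2) by simp
  with prems w' have "m # v = m # v'"
    using support_perm_of_word_Min[OF split.hyps] support_perm_of_word_Min[of u' m' v'] by simp
  then have "v = v'" by simp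
  have "set u = set u'"
    using prems(1,2) split.hyps(1) \<open>m' = m\<close> \<open>v = v'\<close> by auto
  have "perm_of_word u = perm_of_word u'"
  proof
    fix x show "perm_of_word u x = perm_of_word u' x"
    proof (cases "x \<in> set u")
      case True
      then show ?thesis using perm_of_word_split_apply(1)[OF split.hyps(1,2) True]
        perm_of_word_split_apply(1)[OF prems(1) w'(2), of x] prems(3)
        \<open>set u = set u'\<close> \<open>m' = m\<close> \<open>v = v'\<close> by simp
    next
      case False
      then show ?thesis using perm_of_word_permutes \<open>set u = set u'\<close> split.hyps(1) prems(1)
        by (metis distinct_append permutes_not_in)
    qed
  qed
  then have "u = u'" using split.IH prems(1) \<open>set u = set u'\<close> by simp
  then show ?case using w'(1) \<open>m' = m\<close> \<open>v = v'\<close> by simp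
qed simp

lemma bij_betw_perm_of_word: "bij_betw perm_of_word (permutations_of_set {1..n}) (Sym n)"
proof (rule bij_betw_if_inj_on_card_eq)
  show "inj_on perm_of_word (permutations_of_set {1..n})"
    by (rule inj_onI) (auto simp: permutations_of_set_def intro: perm_of_word_inj)
  show "perm_of_word ` permutations_of_set {1..n} \<subseteq> Sym n"
    by (auto simp: permutations_of_set_def Sym_def dest: perm_of_word_permutes)
qed (simp_all add: finite_Sym card_Sym)

section \<open>Permutations whose excedances come first\<close>

definition excedances_first :: "'a::linorder set \<Rightarrow> ('a \<Rightarrow> 'a) \<Rightarrow> bool" where
  "excedances_first A \<tau> \<longleftrightarrow> (\<forall>a\<in>A. \<forall>b\<in>A. \<tau> a \<le> a \<longrightarrow> b < \<tau> b \<longrightarrow> b < a)"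

lemma excedances_first_perm_of_word_iff:
  assumes "distinct w" "w \<noteq> []"
  shows "excedances_first (set w) (perm_of_word w) \<longleftrightarrow>
    stretch_free (adjacent_pairs w) \<and> \<not> (\<exists>(y, y')\<in>adjacent_pairs w. y < y' \<and> last w < y)"
    (is "_ \<longleftrightarrow> ?sf \<and> \<not> ?late")
proof -
  let ?\<tau> = "perm_of_word w"
  note exc = perm_of_word_excedance_iff[OF assms(1)]
  note nonexc = perm_of_word_nonexcedance_iff[OF assms(1)]
  have in_set: "x \<in> set w" "y \<in> set w" if "(x, y) \<in> adjacent_pairs w" for x y
    using that adjacent_pairs_subset by blast+
  show ?thesis
  proof
    assume first: "excedances_first (set w) ?\<tau>"
    have "\<not> (x' < x \<and> x < y \<and> y < y')"
      if "(x, x') \<in> adjacent_pairs w" "(y, y') \<in> adjacent_pairs w" for x x' y y'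
      using first nonexc[OF in_set(1)] exc[OF in_set(1)] in_set that
      unfolding excedances_first_def by (meson order.asym)
    then have "?sf" unfolding stretch_free_def by blast
    moreover have "\<not> (last w < y \<and> y < y')" if "(y, y') \<in> adjacent_pairs w" for y y'
      using first nonexc[of "last w"] exc[OF in_set(1)[OF that]] that in_set(1)[OF that]
        last_in_set[OF assms(2)]
      unfolding excedances_first_def by (meson order.asym)
    then have "\<not> ?late" by blast
    ultimately show "?sf \<and> \<not> ?late" ..
  next
    assume sf: "?sf \<and> \<not> ?late"
    show "excedances_first (set w) ?\<tau>"
      unfolding excedances_first_def
    proof (intro ballI impI)
      fix a b assume ab: "a \<in> set w" "b \<in> set w" "?\<tau> a \<le> a" "b < ?\<tau> b"
      then have "a \<noteq> b" by auto
      obtain b' where b': "(b, b') \<in> adjacent_pairs w" "b < b'" using exc[OF ab(2)] ab(4) by blast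
      have "\<not> a < b"
        using nonexc[OF ab(1)] ab(3) sf b' unfolding stretch_free_def by blast
      with \<open>a \<noteq> b\<close> show "b < a" by simp
    qed
  qed
qed

lemma card_Cstar_Suc_eq_card_excedances_first:
  assumes "1 \<le> n"
  shows "card (Cstar (Suc n)) = card {\<tau> \<in> Sym n. excedances_first {1..n} \<tau>}"
proof -
  have shift:
    "bij_betw (map Suc) (permutations_of_set {1..n}) (permutations_of_set ({1..Suc n} - {1}))"
  proof -
    have "{1..Suc n} - {1} = Suc ` {1..n}"
      by (auto simp: image_iff Suc_le_eq intro!: bexI[of _ "_ - 1"])
    then have "permutations_of_set ({1..Suc n} - {1}) = map Suc ` permutations_of_set {1..n}"
      using permutations_of_set_image_inj[of Suc "{1..n}"]
      by (simp only: inj_Suc inj_on_subset subset_UNIV)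
    then show ?thesis by (simp add: bij_betw_def inj_on_def)
  qed
  have cycle_word:
    "stretch_free (cycle_edges (1 # map Suc w)) \<longleftrightarrow> excedances_first {1..n} (perm_of_word w)"
    if "w \<in> permutations_of_set {1..n}" for w
  proof -
    have w: "distinct w" "set w = {1..n}" "w \<noteq> []"
      using that assms by (auto simp: permutations_of_set_def)
    have "\<forall>x\<in>set (map Suc w). 1 < x" using w(2) by auto
    then have "stretch_free (cycle_edges (1 # map Suc w)) \<longleftrightarrow>
        stretch_free (adjacent_pairs (map Suc w)) \<and>
        \<not> (\<exists>(y, y')\<in>adjacent_pairs (map Suc w). y < y' \<and> last (map Suc w) < y)"
      using w(3) by (simp add: stretch_free_cycle_edges_Cons_less)
    also have "\<dots> \<longleftrightarrow>
        stretch_free (adjacent_pairs w) \<and> \<not> (\<exists>(y, y')\<in>adjacent_pairs w. y < y' \<and> last w < y)"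
      using w(3)
      by (auto simp: adjacent_pairs_map stretch_free_image_strict_mono strict_mono_Suc_iff last_map)
    also have "\<dots> \<longleftrightarrow> excedances_first {1..n} (perm_of_word w)"
      using excedances_first_perm_of_word_iff[OF w(1,3)] w(2) by simp
    finally show ?thesis .
  qed
  have "card (Cstar (Suc n)) =
      card {w \<in> permutations_of_set ({1..Suc n} - {1}). stretch_free (cycle_edges (1 # w))}"
    by (rule card_Cstar_eq_card_words) simp
  also have "\<dots> = card {w \<in> permutations_of_set {1..n}. stretch_free (cycle_edges (1 # map Suc w))}"
    by (rule card_Collect_bij_betw[OF shift, symmetric])
  also have "\<dots> = card {w \<in> permutations_of_set {1..n}. excedances_first {1..n} (perm_of_word w)}"
    using cycle_word by (intro arg_cong[where f = card] Collect_cong) blast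
  also have "\<dots> = card {\<tau> \<in> Sym n. excedances_first {1..n} \<tau>}"
    by (rule card_Collect_bij_betw[OF bij_betw_perm_of_word])
  finally show ?thesis .
qed

lemma initial_excedance_set_iff_excedances_first:
  assumes "\<tau> \<in> Sym n" "1 \<le> n"
  shows "(\<exists>k<n. \<forall>i\<in>{1..n-1}. i < \<tau> i \<longleftrightarrow> i \<le> k) \<longleftrightarrow> excedances_first {1..n} \<tau>"
proof
  assume "\<exists>k<n. \<forall>i\<in>{1..n-1}. i < \<tau> i \<longleftrightarrow> i \<le> k"
  then obtain k where k: "\<forall>i\<in>{1..n-1}. i < \<tau> i \<longleftrightarrow> i \<le> k" by blast
  show "excedances_first {1..n} \<tau>"
    unfolding excedances_first_def
  proof (intro ballI impI)
    fix a b assume ab: "a \<in> {1..n}" "b \<in> {1..n}" "\<tau> a \<le> a" "b < \<tau> b"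
    have "\<tau> permutes {1..n}" using assms(1) by (simp add: Sym_def)
    then have "\<tau> b \<in> {1..n}" using ab(2) by (simp only: permutes_in_image)
    then have "b \<in> {1..n-1}" "b \<le> k" using ab(2,4) k by auto
    then show "b < a" using ab(1,3) k by (metis atLeastAtMost_iff le_trans not_le)
  qed
next
  assume first: "excedances_first {1..n} \<tau>"
  define K where "K = {i \<in> {1..n-1}. i < \<tau> i}"
  have K: "finite (insert 0 K)" "Max (insert 0 K) < n"
    using assms(2) by (auto simp: K_def)
  have "i < \<tau> i \<longleftrightarrow> i \<le> Max (insert 0 K)" if i: "i \<in> {1..n-1}" for i
  proof
    assume "i < \<tau> i"
    then show "i \<le> Max (insert 0 K)" using i K(1) by (simp add: K_def)
  next
    assume le: "i \<le> Max (insert 0 K)"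
    then have "Max (insert 0 K) \<in> K" using i Max_in[OF K(1)] by auto
    then have M: "Max (insert 0 K) \<in> {1..n}" "Max (insert 0 K) < \<tau> (Max (insert 0 K))"
      by (auto simp: K_def)
    show "i < \<tau> i"
    proof (rule ccontr)
      assume "\<not> i < \<tau> i"
      then have "Max (insert 0 K) < i"
        using first M i unfolding excedances_first_def by (auto simp: not_less)
      with le show False by simp
    qed
  qed
  then show "\<exists>k<n. \<forall>i\<in>{1..n-1}. i < \<tau> i \<longleftrightarrow> i \<le> k" using K(2) by blast
qed

lemma sum_ba_count_eq_card:
  assumes "1 \<le> n"
  shows "(\<Sum>k=0..n-1. ba_count k (n - 1 - k)) =
    card {\<tau> \<in> Sym n. \<exists>k<n. \<forall>i\<in>{1..n-1}. i < \<tau> i \<longleftrightarrow> i \<le> k}"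
proof -
  define B where "B k = {\<tau> \<in> Sym n. \<forall>i\<in>{1..n-1}. i < \<tau> i \<longleftrightarrow> i \<le> k}" for k
  have "ba_count k (n - 1 - k) = card (B k)" if "k \<in> {0..n-1}" for k
    using that assms by (simp add: ba_count_def B_def)
  then have "(\<Sum>k=0..n-1. ba_count k (n - 1 - k)) = (\<Sum>k=0..n-1. card (B k))" by simp
  also have "\<dots> = card (\<Union>k\<in>{0..n-1}. B k)"
  proof (rule card_UN_disjoint[symmetric])
    show "\<forall>k\<in>{0..n-1}. finite (B k)" by (simp add: B_def finite_Sym)
    show "\<forall>k\<in>{0..n-1}. \<forall>j\<in>{0..n-1}. k \<noteq> j \<longrightarrow> B k \<inter> B j = {}"
    proof (intro ballI impI)
      fix k j assume kj: "k \<in> {0..n-1}" "j \<in> {0..n-1}" "k \<noteq> j"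
      then have max: "max k j \<in> {1..n-1}" by auto
      show "B k \<inter> B j = {}"
      proof (intro equals0I)
        fix \<tau> assume "\<tau> \<in> B k \<inter> B j"
        then have "max k j \<le> k \<longleftrightarrow> max k j \<le> j" using max unfolding B_def by blast
        with kj(3) show False by (auto simp: max_def split: if_splits)
      qed
    qed
  qed simp
  also have "(\<Union>k\<in>{0..n-1}. B k) = {\<tau> \<in> Sym n. \<exists>k<n. \<forall>i\<in>{1..n-1}. i < \<tau> i \<longleftrightarrow> i \<le> k}"
  proof -
    have "k \<in> {0..n-1} \<longleftrightarrow> k < n" for k using assms by auto
    then show ?thesis unfolding B_def by blast
  qed
  finally show ?thesis .
qed

theorem lemma1p6:
  fixes n :: nat
  assumes "n \<ge> 1"
  shows "card (Cstar (n+1)) = (\<Sum>k=0..n-1. ba_count k (n - 1 - k)) \<and>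
         card (Cstar (n+1)) \<le> alpha n \<and>
         alpha n \<le> card (Cstar (n+1)) + card (Cstar (n+2)) \<and>
         card (Cstar (n+1)) + card (Cstar (n+2)) \<le> 2 * card (Cstar (n+2))"
proof -
  have "card (Cstar (Suc n)) = card {\<tau> \<in> Sym n. excedances_first {1..n} \<tau>}"
    using card_Cstar_Suc_eq_card_excedances_first[OF assms] .
  also have "\<dots> = card {\<tau> \<in> Sym n. \<exists>k<n. \<forall>i\<in>{1..n-1}. i < \<tau> i \<longleftrightarrow> i \<le> k}"
    using initial_excedance_set_iff_excedances_first[OF _ assms]
    by (intro arg_cong[where f = card] Collect_cong) blast
  also have "\<dots> = (\<Sum>k=0..n-1. ba_count k (n - 1 - k))"
    using sum_ba_count_eq_card[OF assms] by simp
  finally show ?thesis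
    using card_Cstar_le_alpha[OF assms] alpha_le_card_Cstar_add[OF assms]
      card_Cstar_le_card_Cstar_Suc[OF assms] by simp
qed

end
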